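(* Let $(f,L)$ satisfy the usual conditions and suppose $S=S^{f,L}>0$. Let $L_0=\frac{\pi}{2\sqrt S}\vee1$, define $\tilde L(t)=L(t)$ if $L(t)\le L_0$ and $\tilde L(t)=L_0+(L(t)-L_0)e^{-(L(t)-L_0)^2}$ if $L(t)>L_0$, and $\tilde f(t)=f(t)+L(t)-\tilde L(t)$. Then the pair $(\tilde f,\tilde L)$ satisfies conditions (II), (III) and (IV), and $S^{\tilde f,\tilde L}\ge S^{f,L}/2>0$.
   Context: For twice continuously differentiable $g:[0,\infty)\to\mathbb R$ and $M:[0,\infty)\to(0,\infty)$ and a constant $r>0$, set $E^{g,M}(t)=|g'(t)|M(t)+\int_0^t|g''(s)|M(s)ds+\frac12|M'(t)|M(t)+\frac12\int_0^t|M''(s)|M(s)ds$ and $S^{g,M}=\liminf_{t\to\infty}\frac1t\int_0^t\big(r-\frac12 g'(s)^2-\frac{\pi^2}{8M(s)^2}+\frac{M'(s)}{2M(s)}\big)ds$. The pair $(g,M)$ satisfies the usual conditions if (I) $g(0)=0$; (II) $g$ and $M$ are twice continuously differentiable; (III) $E^{g,M}(t)/t\to0$ as $t\to\infty$; (IV) $S^{g,M}\in(-\infty,\infty)$. *)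

theory Defs
  imports "HOL-Analysis.Analysis"
begin

text \<open>Functions on [0,\<infinity>) are modelled as real \<Rightarrow> real; only values on {0..} matter.
  Derivatives are taken within {0..} (one-sided at 0).\<close>

definition d1 :: "(real \<Rightarrow> real) \<Rightarrow> real \<Rightarrow> real" where
  "d1 g t = vector_derivative g (at t within {0..})"

definition d2 :: "(real \<Rightarrow> real) \<Rightarrow> real \<Rightarrow> real" where
  "d2 g = d1 (d1 g)"

definition C2_nonneg :: "(real \<Rightarrow> real) \<Rightarrow> bool" where
  "C2_nonneg g \<longleftrightarrow>
     (\<forall>t\<ge>0. g differentiable (at t within {0..})) \<and>
     (\<forall>t\<ge>0. d1 g differentiable (at t within {0..})) \<and>
     continuous_on {0..} (d2 g)"

definition E_fun :: "(real \<Rightarrow> real) \<Rightarrow> (real \<Rightarrow> real) \<Rightarrow> real \<Rightarrow> real" where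
  "E_fun g M t = \<bar>d1 g t\<bar> * M t + integral {0..t} (\<lambda>s. \<bar>d2 g s\<bar> * M s)
      + 1/2 * \<bar>d1 M t\<bar> * M t + 1/2 * integral {0..t} (\<lambda>s. \<bar>d2 M s\<bar> * M s)"

definition S_val :: "real \<Rightarrow> (real \<Rightarrow> real) \<Rightarrow> (real \<Rightarrow> real) \<Rightarrow> ereal" where
  "S_val r g M = Liminf at_top (\<lambda>t. ereal (1 / t * integral {0..t}
      (\<lambda>s. r - 1/2 * (d1 g s)^2 - pi^2 / (8 * (M s)^2) + d1 M s / (2 * M s))))"

definition cond_I :: "(real \<Rightarrow> real) \<Rightarrow> bool" where
  "cond_I g \<longleftrightarrow> g 0 = 0"

definition cond_II :: "(real \<Rightarrow> real) \<Rightarrow> (real \<Rightarrow> real) \<Rightarrow> bool" where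
  "cond_II g M \<longleftrightarrow> C2_nonneg g \<and> C2_nonneg M"

definition cond_III :: "(real \<Rightarrow> real) \<Rightarrow> (real \<Rightarrow> real) \<Rightarrow> bool" where
  "cond_III g M \<longleftrightarrow> ((\<lambda>t. E_fun g M t / t) \<longlongrightarrow> 0) at_top"

definition cond_IV :: "real \<Rightarrow> (real \<Rightarrow> real) \<Rightarrow> (real \<Rightarrow> real) \<Rightarrow> bool" where
  "cond_IV r g M \<longleftrightarrow> \<bar>S_val r g M\<bar> \<noteq> \<infinity>"

definition usual_conditions :: "real \<Rightarrow> (real \<Rightarrow> real) \<Rightarrow> (real \<Rightarrow> real) \<Rightarrow> bool" where
  "usual_conditions r g M \<longleftrightarrow> (\<forall>t\<ge>0. M t > 0) \<and>
     cond_I g \<and> cond_II g M \<and> cond_III g M \<and> cond_IV r g M"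

end

theory Submission
  imports Defs "HOL-Real_Asymp.Real_Asymp"
begin

text \<open>Write \<open>A(t)\<close> for the time average whose \<open>Liminf\<close> is \<open>S\<close>. Its summand \<open>M'/(2M)\<close>
  integrates to \<open>(ln M(t) - ln M(0))/2\<close>, which is \<open>o(t)\<close> for both pairs: \<open>\<bar>L'\<bar>L \<le> 2E = o(t)\<close>
  makes \<open>L(t)^2 = O(t^2)\<close>, and \<open>L\<^sup>~ \<le> L0 + 1\<close>.
  The truncation \<open>L\<^sup>~ = c(L)\<close> satisfies \<open>\<bar>c'\<bar> \<le> 1\<close>, \<open>\<bar>c''\<bar> \<le> 8\<close>, \<open>c(x) \<le> min x (L0 + 1)\<close>, so the
  new pair keeps (II) and (III), and \<open>f\<^sup>~' = f' + (1 - c'(L)) L'\<close> with \<open>\<bar>1 - c'\<bar> \<le> 2\<close>. Young's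
  inequality gives \<open>f\<^sup>~'^2 \<le> (1 + e) f'^2 + 4 (1 + 1/e) L'^2\<close>; here \<open>\<integral>L'^2 \<le> 2E + \<bar>L(0) L'(0)\<bar> = o(t)\<close> by
  parts, and \<open>e \<integral>f'^2 / 2 \<le> e (r t - t A(t)) + o(t)\<close>. Finally \<open>\<pi>^2/(8 L\<^sup>~^2)\<close> exceeds
  \<open>\<pi>^2/(8 L^2)\<close> by at most \<open>\<pi>^2/(8 L0^2) \<le> S/2\<close>. Hence the new \<open>Liminf\<close> is at least
  \<open>(1 + e) S - e r - S/2\<close> for every \<open>e > 0\<close>, i.e. at least \<open>S/2\<close>, and it is at most \<open>r\<close>.\<close>

lemma DERIV_if_le_at_breakpoint:
  fixes g h :: "real \<Rightarrow> real"
  assumes g: "(g has_real_derivative D) (at a)" and h: "(h has_real_derivative D) (at a)"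
    and "g a = h a"
  shows "((\<lambda>x. if x \<le> a then g x else h x) has_real_derivative D) (at a)"
proof -
  let ?k = "\<lambda>x. if x \<le> a then g x else h x"
  have "((\<lambda>y. (g y - g a) / (y - a)) \<longlongrightarrow> D) (at_left a)"
    using g unfolding has_field_derivative_iff filterlim_at_split by simp
  then have left: "((\<lambda>y. (?k y - ?k a) / (y - a)) \<longlongrightarrow> D) (at_left a)"
    by (rule Lim_transform_eventually) (auto simp: eventually_at_left_field intro: exI[of _ "a - 1"])
  have "((\<lambda>y. (h y - h a) / (y - a)) \<longlongrightarrow> D) (at_right a)"
    using h unfolding has_field_derivative_iff filterlim_at_split by simp
  then have right: "((\<lambda>y. (?k y - ?k a) / (y - a)) \<longlongrightarrow> D) (at_right a)"
    by (rule Lim_transform_eventually)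
      (auto simp: \<open>g a = h a\<close> eventually_at_right_field intro: exI[of _ "a + 1"])
  show ?thesis
    unfolding has_field_derivative_iff using left right by (simp add: filterlim_at_split)
qed

lemma DERIV_if_le:
  fixes g h :: "real \<Rightarrow> real"
  assumes g: "\<And>x. (g has_real_derivative g' x) (at x)" and h: "\<And>x. (h has_real_derivative h' x) (at x)"
    and "g a = h a" "g' a = h' a"
  shows "((\<lambda>x. if x \<le> a then g x else h x) has_real_derivative (if x \<le> a then g' x else h' x)) (at x)"
proof (cases x a rule: linorder_cases)
  case less
  show ?thesis
    by (rule has_field_derivative_transform_within_open[of g _ x "{..<a}"]) (use less g[of x] in auto)
next
  case equal
  show ?thesis
    using DERIV_if_le_at_breakpoint[OF g[of a], of h] h[of a] assms(3,4) equal by simp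
next
  case greater
  show ?thesis
    by (rule has_field_derivative_transform_within_open[of h _ x "{a<..}"]) (use greater h[of x] in auto)
qed

definition cutoff :: "real \<Rightarrow> real \<Rightarrow> real" where
  "cutoff c x = (if x \<le> c then x else c + (x - c) * exp (- ((x - c)^2)))"

definition cutoff' :: "real \<Rightarrow> real \<Rightarrow> real" where
  "cutoff' c x = (if x \<le> c then 1 else (1 - 2 * (x - c)^2) * exp (- ((x - c)^2)))"

definition cutoff'' :: "real \<Rightarrow> real \<Rightarrow> real" where
  "cutoff'' c x = (if x \<le> c then 0 else (4 * (x - c)^3 - 6 * (x - c)) * exp (- ((x - c)^2)))"

lemma has_real_derivative_cutoff: "(cutoff c has_real_derivative cutoff' c x) (at x)"
  unfolding cutoff_def[abs_def] cutoff'_def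
  apply (rule DERIV_if_le)
     apply (auto intro!: derivative_eq_intros)
  apply (simp add: algebra_simps power2_eq_square)
  done

lemma has_real_derivative_cutoff': "(cutoff' c has_real_derivative cutoff'' c x) (at x)"
  unfolding cutoff'_def[abs_def] cutoff''_def
  apply (rule DERIV_if_le)
     apply (auto intro!: derivative_eq_intros)
  apply (simp add: algebra_simps power2_eq_square power3_eq_cube)
  done

lemma isCont_cutoff'': "isCont (cutoff'' c) x"
proof -
  let ?p = "\<lambda>x. (4 * (x - c)^3 - 6 * (x - c)) * exp (- ((x - c)^2))"
  have "isCont (\<lambda>x. if x \<le> c then 0 else ?p x) x"
  proof (cases x c rule: linorder_cases)
    case less
    have "eventually (\<lambda>y. y \<in> {..<c}) (nhds x)"
      by (rule eventually_nhds_in_open) (use less in auto)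
    then have "eventually (\<lambda>y. (if y \<le> c then 0 else ?p y) = 0) (nhds x)"
      by eventually_elim auto
    then show ?thesis by (subst isCont_cong) auto
  next
    case equal
    show ?thesis unfolding equal
      by (rule isCont_If_ge) (auto intro!: tendsto_eq_intros)
  next
    case greater
    have "eventually (\<lambda>y. y \<in> {c<..}) (nhds x)"
      by (rule eventually_nhds_in_open) (use greater in auto)
    then have "eventually (\<lambda>y. (if y \<le> c then 0 else ?p y) = ?p y) (nhds x)"
      by eventually_elim auto
    moreover have "isCont ?p x" by (intro continuous_intros)
    ultimately show ?thesis by (subst isCont_cong) auto
  qed
  then show ?thesis unfolding cutoff''_def[abs_def] .
qed

lemma exp_neg_mult_square_le_1:
  fixes v :: real
  assumes "v \<ge> 0"
  shows "exp (- v) * (1 + v/2)^2 \<le> 1"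
proof -
  have "(1 + v/2)^2 \<le> exp (v/2)^2"
    using assms exp_ge_add_one_self[of "v/2"] by (intro power_mono) auto
  also have "\<dots> = exp v" by (simp add: power2_eq_square flip: exp_add)
  finally show ?thesis by (simp add: mult.commute pos_divide_le_eq exp_minus field_simps)
qed

lemma mult_exp_neg_square_le_1: "(u::real) * exp (- (u^2)) \<le> 1"
proof -
  have v: "u^2 \<ge> 0" by simp
  have "u \<le> 1 + u^2/2" using zero_le_power2[of "u - 1"] by (simp add: power2_diff)
  also have "\<dots> \<le> (1 + u^2/2)^2" by (rule self_le_power) simp_all
  finally have "u * exp (- (u^2)) \<le> exp (- (u^2)) * (1 + u^2/2)^2"
    by (simp add: mult.commute)
  also have "\<dots> \<le> 1" by (rule exp_neg_mult_square_le_1[OF v])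
  finally show ?thesis .
qed

lemma cutoff_le: "cutoff c x \<le> x"
proof (cases "x \<le> c")
  case False
  then have "(x - c) * exp (- ((x - c)^2)) \<le> x - c" by (intro mult_left_le) auto
  then show ?thesis by (simp add: cutoff_def)
qed (simp add: cutoff_def)

lemma cutoff_le_plus_1: "cutoff c x \<le> c + 1"
  using mult_exp_neg_square_le_1[of "x - c"] by (auto simp: cutoff_def)

lemma cutoff_ge: "x > c \<Longrightarrow> cutoff c x \<ge> c"
  by (simp add: cutoff_def)

lemma abs_cutoff'_le: "\<bar>cutoff' c x\<bar> \<le> 1"
proof -
  define v where "v = (x - c)^2"
  have v: "v \<ge> 0" by (simp add: v_def)
  have "(1 - 2 * v) * exp (- v) \<le> 1 * exp (- v)" using v by (intro mult_right_mono) auto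
  also have "\<dots> \<le> 1" using v by simp
  finally have upper: "(1 - 2 * v) * exp (- v) \<le> 1" .
  have "2 * v - 1 \<le> (1 + v/2)^2"
    using zero_le_power2[of "v/2 - 1"] by (simp add: power2_eq_square algebra_simps)
  then have "(2 * v - 1) * exp (- v) \<le> exp (- v) * (1 + v/2)^2"
    by (simp add: mult.commute mult_right_mono)
  also have "\<dots> \<le> 1" by (rule exp_neg_mult_square_le_1[OF v])
  finally have lower: "(2 * v - 1) * exp (- v) \<le> 1" .
  show ?thesis
    using upper lower by (auto simp: cutoff'_def v_def abs_le_iff algebra_simps)
qed

lemma abs_cutoff''_le: "\<bar>cutoff'' c x\<bar> \<le> 8"
proof (cases "x \<le> c")
  case False
  define u where "u = x - c"
  have u: "u > 0" using False by (simp add: u_def)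
  have "0 \<le> 2 * u^2 * (u - 1)^2" by simp
  then have cube: "4 * u^3 \<le> 2 * u^2 + 2 * u^4"
    by (simp add: power2_eq_square power3_eq_cube power4_eq_xxxx algebra_simps)
  have lin: "6 * u \<le> 3 + 3 * u^2"
    using zero_le_power2[of "u - 1"] by (simp add: power2_eq_square algebra_simps)
  have sq: "8 * (1 + u^2/2)^2 = 8 + 8 * u^2 + 2 * u^4"
    by (simp add: power2_eq_square power4_eq_xxxx algebra_simps)
  have "\<bar>4 * u^3 - 6 * u\<bar> \<le> 4 * u^3 + 6 * u" using u by (simp add: abs_le_iff)
  also have "\<dots> \<le> 8 * (1 + u^2/2)^2"
    unfolding sq using cube lin zero_le_power2[of u] by linarith
  finally have "\<bar>4 * u^3 - 6 * u\<bar> * exp (- (u^2)) \<le> 8 * (1 + u^2/2)^2 * exp (- (u^2))"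
    by (intro mult_right_mono) auto
  also have "\<dots> \<le> 8" using exp_neg_mult_square_le_1[of "u^2"] by (simp add: mult.commute)
  finally show ?thesis using False by (simp add: cutoff''_def u_def abs_mult)
qed (simp add: cutoff''_def)

lemma at_within_atLeast_0_nontrivial: "(t::real) \<ge> 0 \<Longrightarrow> at t within {0..} \<noteq> bot"
  using islimpt_subset[of t "{t..t+1}" "{0..}"] trivial_limit_within by auto

lemma d1_eqI: "t \<ge> 0 \<Longrightarrow> (g has_real_derivative D) (at t within {0..}) \<Longrightarrow> d1 g t = D"
  unfolding d1_def has_real_derivative_iff_has_vector_derivative
  using at_within_atLeast_0_nontrivial vector_derivative_within by blast

lemma C2_nonneg_has_d1:
  "C2_nonneg g \<Longrightarrow> t \<ge> 0 \<Longrightarrow> (g has_real_derivative d1 g t) (at t within {0..})"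
  unfolding C2_nonneg_def d1_def has_real_derivative_iff_has_vector_derivative
  using vector_derivative_works by blast

lemma C2_nonneg_has_d2:
  "C2_nonneg g \<Longrightarrow> t \<ge> 0 \<Longrightarrow> (d1 g has_real_derivative d2 g t) (at t within {0..})"
  unfolding C2_nonneg_def d2_def d1_def[of "d1 g"] has_real_derivative_iff_has_vector_derivative
  using vector_derivative_works by blast

lemma C2_nonneg_continuous: "C2_nonneg g \<Longrightarrow> continuous_on {0..} g"
  unfolding continuous_on_eq_continuous_within C2_nonneg_def
  by (auto intro: differentiable_imp_continuous_within)

lemma C2_nonneg_continuous_d1: "C2_nonneg g \<Longrightarrow> continuous_on {0..} (d1 g)"
  unfolding continuous_on_eq_continuous_within C2_nonneg_def
  by (auto intro: differentiable_imp_continuous_within)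

lemma C2_nonneg_continuous_d2: "C2_nonneg g \<Longrightarrow> continuous_on {0..} (d2 g)"
  unfolding C2_nonneg_def by auto

lemma C2_nonneg_intro:
  assumes g': "\<And>t. t \<ge> 0 \<Longrightarrow> (g has_real_derivative g' t) (at t within {0..})"
    and g'': "\<And>t. t \<ge> 0 \<Longrightarrow> (g' has_real_derivative g'' t) (at t within {0..})"
    and "continuous_on {0..} g''"
  shows "C2_nonneg g" "\<And>t. t \<ge> 0 \<Longrightarrow> d1 g t = g' t" "\<And>t. t \<ge> 0 \<Longrightarrow> d2 g t = g'' t"
proof -
  show d1: "\<And>t. t \<ge> 0 \<Longrightarrow> d1 g t = g' t" using g' d1_eqI by blast
  have d1': "(d1 g has_real_derivative g'' t) (at t within {0..})" if "t \<ge> 0" for t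
    by (rule has_field_derivative_transform_within[OF g''[OF that], of 1]) (use that d1 in auto)
  show d2: "\<And>t. t \<ge> 0 \<Longrightarrow> d2 g t = g'' t" unfolding d2_def using d1' d1_eqI by blast
  have "continuous_on {0..} (d2 g)"
    using assms(3) by (rule continuous_on_cong[THEN iffD2, rotated 2]) (auto simp: d2)
  then show "C2_nonneg g"
    unfolding C2_nonneg_def using g' d1' by (auto simp: has_field_derivative_def intro: differentiableI)
qed

lemma C2_nonneg_compose:
  assumes L: "C2_nonneg L"
    and p: "\<And>x. (p has_real_derivative p' x) (at x)"
    and p': "\<And>x. (p' has_real_derivative p'' x) (at x)"
    and p'': "\<And>x. isCont p'' x"
  shows "C2_nonneg (\<lambda>t. p (L t))"
    "\<And>t. t \<ge> 0 \<Longrightarrow> d1 (\<lambda>t. p (L t)) t = p' (L t) * d1 L t"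
    "\<And>t. t \<ge> 0 \<Longrightarrow> d2 (\<lambda>t. p (L t)) t = p'' (L t) * (d1 L t)^2 + p' (L t) * d2 L t"
proof -
  have h1: "((\<lambda>t. p (L t)) has_real_derivative p' (L t) * d1 L t) (at t within {0..})"
    if "t \<ge> 0" for t
    using DERIV_chain'[OF C2_nonneg_has_d1[OF L that] p] .
  have h2: "((\<lambda>t. p' (L t) * d1 L t) has_real_derivative p'' (L t) * (d1 L t)^2 + p' (L t) * d2 L t)
      (at t within {0..})" if "t \<ge> 0" for t
    using DERIV_mult[OF DERIV_chain'[OF C2_nonneg_has_d1[OF L that] p'] C2_nonneg_has_d2[OF L that]]
    by (simp add: power2_eq_square algebra_simps)
  have "continuous_on {0..} (\<lambda>t. q (L t))" if "\<And>x. isCont q x" for q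
    using that by (intro continuous_on_compose2[OF _ C2_nonneg_continuous[OF L], of UNIV])
      (auto intro: continuous_at_imp_continuous_on)
  then have "continuous_on {0..} (\<lambda>t. p' (L t))" "continuous_on {0..} (\<lambda>t. p'' (L t))"
    using DERIV_isCont[OF p'] p'' by blast+
  then have "continuous_on {0..} (\<lambda>t. p'' (L t) * (d1 L t)^2 + p' (L t) * d2 L t)"
    using C2_nonneg_continuous_d1[OF L] C2_nonneg_continuous_d2[OF L] by (intro continuous_intros)
  from C2_nonneg_intro[OF h1 h2 this]
  show "C2_nonneg (\<lambda>t. p (L t))"
    "\<And>t. t \<ge> 0 \<Longrightarrow> d1 (\<lambda>t. p (L t)) t = p' (L t) * d1 L t"
    "\<And>t. t \<ge> 0 \<Longrightarrow> d2 (\<lambda>t. p (L t)) t = p'' (L t) * (d1 L t)^2 + p' (L t) * d2 L t"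
    by simp_all
qed

lemma C2_nonneg_add_diff:
  assumes f: "C2_nonneg f" and g: "C2_nonneg g" and h: "C2_nonneg h"
  shows "C2_nonneg (\<lambda>t. f t + g t - h t)"
    "\<And>t. t \<ge> 0 \<Longrightarrow> d1 (\<lambda>t. f t + g t - h t) t = d1 f t + d1 g t - d1 h t"
    "\<And>t. t \<ge> 0 \<Longrightarrow> d2 (\<lambda>t. f t + g t - h t) t = d2 f t + d2 g t - d2 h t"
proof -
  have h1: "((\<lambda>t. f t + g t - h t) has_real_derivative d1 f t + d1 g t - d1 h t)
      (at t within {0..})" if "t \<ge> 0" for t
    using C2_nonneg_has_d1[OF f that] C2_nonneg_has_d1[OF g that] C2_nonneg_has_d1[OF h that]
    by (intro derivative_intros)
  have h2: "((\<lambda>t. d1 f t + d1 g t - d1 h t) has_real_derivative d2 f t + d2 g t - d2 h t)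
      (at t within {0..})" if "t \<ge> 0" for t
    using C2_nonneg_has_d2[OF f that] C2_nonneg_has_d2[OF g that] C2_nonneg_has_d2[OF h that]
    by (intro derivative_intros)
  have "continuous_on {0..} (\<lambda>t. d2 f t + d2 g t - d2 h t)"
    using C2_nonneg_continuous_d2[OF f] C2_nonneg_continuous_d2[OF g] C2_nonneg_continuous_d2[OF h]
    by (intro continuous_intros)
  from C2_nonneg_intro[OF h1 h2 this]
  show "C2_nonneg (\<lambda>t. f t + g t - h t)"
    "\<And>t. t \<ge> 0 \<Longrightarrow> d1 (\<lambda>t. f t + g t - h t) t = d1 f t + d1 g t - d1 h t"
    "\<And>t. t \<ge> 0 \<Longrightarrow> d2 (\<lambda>t. f t + g t - h t) t = d2 f t + d2 g t - d2 h t"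
    by simp_all
qed

lemma continuous_on_atLeast_integrable_on:
  fixes g :: "real \<Rightarrow> real"
  assumes "continuous_on {0..} g"
  shows "g integrable_on {0..(t::real)}"
  by (rule integrable_continuous_interval, rule continuous_on_subset[OF assms]) auto

lemma has_integral_from_derivative_within_nonneg:
  assumes "0 \<le> a" "a \<le> t" "\<And>s. s \<ge> 0 \<Longrightarrow> (F has_real_derivative F' s) (at s within {0..})"
  shows "(F' has_integral (F t - F a)) {a..t}"
proof (rule fundamental_theorem_of_calculus[OF assms(2)])
  fix x assume "x \<in> {a..t}"
  then have "(F has_real_derivative F' x) (at x within {0..})" using assms by auto
  then have "(F has_real_derivative F' x) (at x within {a..t})"
    by (rule DERIV_subset) (use assms in auto)
  then show "(F has_vector_derivative F' x) (at x within {a..t})"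
    by (simp add: has_real_derivative_iff_has_vector_derivative)
qed

lemma abs_d2_mult_integrable_nonneg:
  assumes "C2_nonneg g" "C2_nonneg M" "\<forall>t\<ge>0. M t > 0" "t \<ge> 0"
  shows "(\<lambda>s. \<bar>d2 g s\<bar> * M s) integrable_on {0..t}" "integral {0..t} (\<lambda>s. \<bar>d2 g s\<bar> * M s) \<ge> 0"
proof -
  have "continuous_on {0..} (\<lambda>s. \<bar>d2 g s\<bar> * M s)"
    using C2_nonneg_continuous_d2[OF assms(1)] C2_nonneg_continuous[OF assms(2)]
    by (intro continuous_intros)
  then show int: "(\<lambda>s. \<bar>d2 g s\<bar> * M s) integrable_on {0..t}"
    by (rule continuous_on_atLeast_integrable_on)
  show "integral {0..t} (\<lambda>s. \<bar>d2 g s\<bar> * M s) \<ge> 0"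
    using assms(3) by (intro integral_nonneg[OF int]) (simp add: less_imp_le)
qed

lemma E_fun_nonneg:
  assumes "C2_nonneg g" "C2_nonneg M" "\<forall>t\<ge>0. M t > 0" "t \<ge> 0"
  shows "E_fun g M t \<ge> 0"
  using abs_d2_mult_integrable_nonneg[OF assms(1,2,3,4)] abs_d2_mult_integrable_nonneg[OF assms(2,2,3,4)]
    assms(3)[rule_format, OF assms(4)] unfolding E_fun_def by simp

text \<open>The summand \<open>M' / (2 M)\<close> of the integrand of \<open>S_val\<close> integrates exactly to
  \<open>(ln (M t) - ln (M 0)) / 2\<close>, so only the rest, \<open>S_integrand\<close>, has to be estimated.\<close>

definition S_integrand :: "real \<Rightarrow> (real \<Rightarrow> real) \<Rightarrow> (real \<Rightarrow> real) \<Rightarrow> real \<Rightarrow> real" where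
  "S_integrand r g M s = r - 1/2 * (d1 g s)^2 - pi^2 / (8 * (M s)^2)"

definition S_avg :: "real \<Rightarrow> (real \<Rightarrow> real) \<Rightarrow> (real \<Rightarrow> real) \<Rightarrow> real \<Rightarrow> real" where
  "S_avg r g M t = 1 / t * integral {0..t} (\<lambda>s. S_integrand r g M s + d1 M s / (2 * M s))"

lemma S_integrand_le: "S_integrand r g M s \<le> r"
proof -
  have "0 \<le> pi^2 / (8 * (M s)^2)" by simp
  then show ?thesis unfolding S_integrand_def using zero_le_power2[of "d1 g s"] by linarith
qed

lemma S_val_eq_Liminf_S_avg: "S_val r g M = Liminf at_top (\<lambda>t. ereal (S_avg r g M t))"
  unfolding S_val_def S_avg_def S_integrand_def ..

lemma
  assumes g: "C2_nonneg g" and M: "C2_nonneg M" and pos: "\<forall>t\<ge>0. M t > 0" and t: "t > 0"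
  shows S_integrand_integrable: "S_integrand r g M integrable_on {0..t}"
    and mult_S_avg_eq: "t * S_avg r g M t = integral {0..t} (S_integrand r g M) + (ln (M t) - ln (M 0)) / 2"
proof -
  have "continuous_on {0..} (S_integrand r g M)"
    unfolding S_integrand_def using C2_nonneg_continuous[OF M] C2_nonneg_continuous_d1[OF g] pos
    by (intro continuous_intros) (auto simp: less_imp_neq[symmetric])
  then show int: "S_integrand r g M integrable_on {0..t}"
    by (rule continuous_on_atLeast_integrable_on)
  have "((\<lambda>s. ln (M s) / 2) has_real_derivative d1 M s / (2 * M s)) (at s within {0..})"
    if "s \<ge> 0" for s
    using DERIV_cdivide[OF DERIV_chain'[OF C2_nonneg_has_d1[OF M that] DERIV_ln[OF pos[rule_format, OF that]]], of 2]
    by (simp add: field_simps)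
  then have "((\<lambda>s. d1 M s / (2 * M s)) has_integral (ln (M t) / 2 - ln (M 0) / 2)) {0..t}"
    using has_integral_from_derivative_within_nonneg[of 0 t "\<lambda>s. ln (M s) / 2"] t by simp
  from has_integral_add[OF integrable_integral[OF int] this] t
  show "t * S_avg r g M t = integral {0..t} (S_integrand r g M) + (ln (M t) - ln (M 0)) / 2"
    unfolding S_avg_def by (simp add: integral_unique field_simps)
qed

lemma integral_square_d1_le_E_fun:
  assumes g: "C2_nonneg g" and M: "C2_nonneg M" and pos: "\<forall>t\<ge>0. M t > 0"
    and t: "t \<ge> 0"
  shows "integral {0..t} (\<lambda>s. (d1 M s)^2) \<le> 2 * E_fun g M t + \<bar>M 0 * d1 M 0\<bar>"
proof -
  have "((\<lambda>s. M s * d1 M s) has_real_derivative (d1 M s)^2 + M s * d2 M s) (at s within {0..})"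
    if "s \<ge> 0" for s
    using DERIV_mult[OF C2_nonneg_has_d1[OF M that] C2_nonneg_has_d2[OF M that]]
    by (simp add: power2_eq_square algebra_simps)
  then have parts: "((\<lambda>s. (d1 M s)^2 + M s * d2 M s) has_integral (M t * d1 M t - M 0 * d1 M 0)) {0..t}"
    using has_integral_from_derivative_within_nonneg[of 0 t "\<lambda>s. M s * d1 M s"] t by simp
  have int_sq: "(\<lambda>s. (d1 M s)^2) integrable_on {0..t}"
    using C2_nonneg_continuous_d1[OF M]
    by (intro continuous_on_atLeast_integrable_on continuous_intros)
  have int_prod: "(\<lambda>s. M s * d2 M s) integrable_on {0..t}"
    using C2_nonneg_continuous[OF M] C2_nonneg_continuous_d2[OF M]
    by (intro continuous_on_atLeast_integrable_on continuous_intros)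
  have int_abs: "(\<lambda>s. \<bar>d2 M s\<bar> * M s) integrable_on {0..t}"
    "integral {0..t} (\<lambda>s. \<bar>d2 M s\<bar> * M s) \<ge> 0"
    "integral {0..t} (\<lambda>s. \<bar>d2 g s\<bar> * M s) \<ge> 0"
    using abs_d2_mult_integrable_nonneg[OF M M pos t] abs_d2_mult_integrable_nonneg[OF g M pos t]
    by simp_all
  have "- (M s * d2 M s) \<le> \<bar>d2 M s\<bar> * M s" if "s \<in> {0..t}" for s
    using pos[rule_format, of s] that mult_left_mono[OF abs_ge_minus_self[of "d2 M s"], of "M s"]
    by (simp add: mult.commute)
  then have "integral {0..t} (\<lambda>s. - (M s * d2 M s)) \<le> integral {0..t} (\<lambda>s. \<bar>d2 M s\<bar> * M s)"
    using integrable_neg[OF int_prod] int_abs(1) by (intro integral_le)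
  then have "- integral {0..t} (\<lambda>s. M s * d2 M s) \<le> integral {0..t} (\<lambda>s. \<bar>d2 M s\<bar> * M s)"
    by (simp add: integral_neg)
  moreover have "integral {0..t} (\<lambda>s. (d1 M s)^2) + integral {0..t} (\<lambda>s. M s * d2 M s)
      = M t * d1 M t - M 0 * d1 M 0"
    using integral_add[OF int_sq int_prod] integral_unique[OF parts] by simp
  moreover have "M t * d1 M t \<le> \<bar>d1 M t\<bar> * M t" "0 \<le> \<bar>d1 g t\<bar> * M t"
    using pos[rule_format, OF t] by (simp_all add: mult.commute)
  moreover have "- (M 0 * d1 M 0) \<le> \<bar>M 0 * d1 M 0\<bar>" by simp
  ultimately show ?thesis
    using int_abs(2,3) unfolding E_fun_def by argo
qed

lemma square_add_le:
  fixes x y e :: real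
  assumes "e > 0"
  shows "(x + y)^2 \<le> (1 + e) * x^2 + (1 + 1/e) * y^2"
proof -
  have "0 \<le> (e * x - y)^2 / e" using assms by simp
  also have "\<dots> = e * x^2 - 2 * (x * y) + y^2 / e"
    using assms by (simp add: field_simps power2_eq_square)
  finally have "2 * (x * y) \<le> e * x^2 + y^2 / e" by simp
  moreover have "(1 + e) * x^2 + (1 + 1/e) * y^2 = x^2 + e * x^2 + y^2 + y^2 / e"
    by (simp add: algebra_simps)
  ultimately show ?thesis by (simp add: power2_sum)
qed

locale truncation =
  fixes f L :: "real \<Rightarrow> real" and L0 :: real and Lt ft :: "real \<Rightarrow> real"
  assumes C2_f: "C2_nonneg f" and C2_L: "C2_nonneg L" and L_pos: "\<forall>t\<ge>0. L t > 0"
    and L0_ge_1: "L0 \<ge> 1" and cond_III: "cond_III f L"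
    and Lt_eq: "\<And>t. Lt t = cutoff L0 (L t)" and ft_eq: "\<And>t. ft t = f t + L t - Lt t"
begin

lemma
  shows C2_Lt: "C2_nonneg Lt"
    and d1_Lt: "t \<ge> 0 \<Longrightarrow> d1 Lt t = cutoff' L0 (L t) * d1 L t"
    and d2_Lt: "t \<ge> 0 \<Longrightarrow> d2 Lt t = cutoff'' L0 (L t) * (d1 L t)^2 + cutoff' L0 (L t) * d2 L t"
proof -
  have "Lt = (\<lambda>t. cutoff L0 (L t))" by (rule ext) (rule Lt_eq)
  then show "C2_nonneg Lt" "t \<ge> 0 \<Longrightarrow> d1 Lt t = cutoff' L0 (L t) * d1 L t"
    "t \<ge> 0 \<Longrightarrow> d2 Lt t = cutoff'' L0 (L t) * (d1 L t)^2 + cutoff' L0 (L t) * d2 L t"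
    using C2_nonneg_compose[OF C2_L has_real_derivative_cutoff has_real_derivative_cutoff'
        isCont_cutoff''] by simp_all
qed

lemma
  shows C2_ft: "C2_nonneg ft"
    and d1_ft: "t \<ge> 0 \<Longrightarrow> d1 ft t = d1 f t + (1 - cutoff' L0 (L t)) * d1 L t"
    and d2_ft: "t \<ge> 0 \<Longrightarrow>
      d2 ft t = d2 f t + (1 - cutoff' L0 (L t)) * d2 L t - cutoff'' L0 (L t) * (d1 L t)^2"
proof -
  have "ft = (\<lambda>t. f t + L t - Lt t)" by (rule ext) (rule ft_eq)
  then show "C2_nonneg ft" "t \<ge> 0 \<Longrightarrow> d1 ft t = d1 f t + (1 - cutoff' L0 (L t)) * d1 L t"
    "t \<ge> 0 \<Longrightarrow> d2 ft t = d2 f t + (1 - cutoff' L0 (L t)) * d2 L t - cutoff'' L0 (L t) * (d1 L t)^2"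
    using C2_nonneg_add_diff[OF C2_f C2_L C2_Lt] d1_Lt d2_Lt by (simp_all add: algebra_simps)
qed

lemma Lt_ge_min: "t \<ge> 0 \<Longrightarrow> Lt t \<ge> min (L t) L0"
  using cutoff_ge[of L0 "L t"] by (auto simp: Lt_eq cutoff_def)

lemma Lt_pos: "\<forall>t\<ge>0. Lt t > 0"
  using Lt_ge_min L_pos L0_ge_1 by (smt (verit))

lemma Lt_le: "Lt t \<le> L t" "Lt t \<le> L0 + 1"
  unfolding Lt_eq by (rule cutoff_le, rule cutoff_le_plus_1)

lemma ln_Lt_ge: "t \<ge> 0 \<Longrightarrow> ln (Lt t) \<ge> min (ln (L t)) 0"
proof (cases "L t \<le> L0")
  case False
  then have "Lt t \<ge> 1" using cutoff_ge[of L0 "L t"] L0_ge_1 by (simp add: Lt_eq)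
  then show ?thesis using ln_ge_zero min.coboundedI2 by blast
qed (simp add: Lt_eq cutoff_def)

lemma abs_derivatives_truncated_le:
  assumes "s \<ge> 0"
  shows "\<bar>d1 ft s\<bar> \<le> \<bar>d1 f s\<bar> + 2 * \<bar>d1 L s\<bar>"
    "\<bar>d1 Lt s\<bar> \<le> \<bar>d1 L s\<bar>"
    "\<bar>d2 ft s\<bar> \<le> \<bar>d2 f s\<bar> + 2 * \<bar>d2 L s\<bar> + 8 * (d1 L s)^2"
    "\<bar>d2 Lt s\<bar> \<le> 8 * (d1 L s)^2 + \<bar>d2 L s\<bar>"
proof -
  define p where "p = cutoff' L0 (L s)"
  define q where "q = cutoff'' L0 (L s)"
  have p: "\<bar>p\<bar> \<le> 1" "\<bar>1 - p\<bar> \<le> 2" using abs_cutoff'_le[of L0 "L s"] by (auto simp: p_def)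
  have q: "\<bar>q\<bar> \<le> 8" using abs_cutoff''_le by (simp add: q_def)
  have "\<bar>(1 - p) * d1 L s\<bar> \<le> 2 * \<bar>d1 L s\<bar>" "\<bar>(1 - p) * d2 L s\<bar> \<le> 2 * \<bar>d2 L s\<bar>"
    "\<bar>p * d1 L s\<bar> \<le> \<bar>d1 L s\<bar>" "\<bar>p * d2 L s\<bar> \<le> \<bar>d2 L s\<bar>"
    "\<bar>q * (d1 L s)^2\<bar> \<le> 8 * (d1 L s)^2"
    unfolding abs_mult
    using mult_right_mono[OF p(2) abs_ge_zero[of "d1 L s"]] mult_right_mono[OF p(2) abs_ge_zero[of "d2 L s"]]
      mult_right_mono[OF p(1) abs_ge_zero[of "d1 L s"]] mult_right_mono[OF p(1) abs_ge_zero[of "d2 L s"]]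
      mult_right_mono[OF q zero_le_power2[of "d1 L s"]]
    by simp_all
  then show "\<bar>d1 ft s\<bar> \<le> \<bar>d1 f s\<bar> + 2 * \<bar>d1 L s\<bar>"
    "\<bar>d1 Lt s\<bar> \<le> \<bar>d1 L s\<bar>"
    "\<bar>d2 ft s\<bar> \<le> \<bar>d2 f s\<bar> + 2 * \<bar>d2 L s\<bar> + 8 * (d1 L s)^2"
    "\<bar>d2 Lt s\<bar> \<le> 8 * (d1 L s)^2 + \<bar>d2 L s\<bar>"
    unfolding d1_ft[OF assms] d1_Lt[OF assms] d2_ft[OF assms] d2_Lt[OF assms] p_def[symmetric] q_def[symmetric]
    by (smt (verit, best) abs_triangle_ineq abs_triangle_ineq4)+
qed

lemma weighted_derivatives_truncated_le:
  assumes "s \<ge> 0"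
  shows "\<bar>d1 ft s\<bar> * Lt s \<le> \<bar>d1 f s\<bar> * L s + 2 * (\<bar>d1 L s\<bar> * L s)"
    "\<bar>d1 Lt s\<bar> * Lt s \<le> \<bar>d1 L s\<bar> * L s"
    "\<bar>d2 ft s\<bar> * Lt s \<le> \<bar>d2 f s\<bar> * L s + 2 * (\<bar>d2 L s\<bar> * L s) + 8 * (L0 + 1) * (d1 L s)^2"
    "\<bar>d2 Lt s\<bar> * Lt s \<le> 8 * (L0 + 1) * (d1 L s)^2 + \<bar>d2 L s\<bar> * L s"
proof -
  have Lt: "0 \<le> Lt s" "Lt s \<le> L s" "Lt s \<le> L0 + 1" using Lt_pos assms Lt_le by auto
  have "\<bar>d1 f s\<bar> * Lt s \<le> \<bar>d1 f s\<bar> * L s" "\<bar>d1 L s\<bar> * Lt s \<le> \<bar>d1 L s\<bar> * L s"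
    "\<bar>d2 f s\<bar> * Lt s \<le> \<bar>d2 f s\<bar> * L s" "\<bar>d2 L s\<bar> * Lt s \<le> \<bar>d2 L s\<bar> * L s"
    "(d1 L s)^2 * Lt s \<le> (d1 L s)^2 * (L0 + 1)"
    using Lt by (auto intro!: mult_left_mono)
  moreover note abs_derivatives_truncated_le[OF assms, THEN mult_right_mono, OF Lt(1)]
  ultimately show "\<bar>d1 ft s\<bar> * Lt s \<le> \<bar>d1 f s\<bar> * L s + 2 * (\<bar>d1 L s\<bar> * L s)"
    "\<bar>d1 Lt s\<bar> * Lt s \<le> \<bar>d1 L s\<bar> * L s"
    "\<bar>d2 ft s\<bar> * Lt s \<le> \<bar>d2 f s\<bar> * L s + 2 * (\<bar>d2 L s\<bar> * L s) + 8 * (L0 + 1) * (d1 L s)^2"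
    "\<bar>d2 Lt s\<bar> * Lt s \<le> 8 * (L0 + 1) * (d1 L s)^2 + \<bar>d2 L s\<bar> * L s"
    by (simp_all add: algebra_simps)
qed

lemma E_fun_truncated_le:
  assumes t: "t \<ge> 0"
  shows "E_fun ft Lt t \<le> (5 + 24 * (L0 + 1)) * E_fun f L t + 12 * (L0 + 1) * \<bar>L 0 * d1 L 0\<bar>"
proof -
  define K where "K = L0 + 1"
  define I where "I = (\<lambda>g M. integral {0..t} (\<lambda>s. \<bar>d2 g s\<bar> * M s))"
  define IB where "IB = integral {0..t} (\<lambda>s. (d1 L s)^2)"
  have K: "K \<ge> 0" using L0_ge_1 by (simp add: K_def)
  have has_I: "((\<lambda>s. \<bar>d2 g s\<bar> * M s) has_integral I g M) {0..t}" "I g M \<ge> 0"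
    if "C2_nonneg g" "C2_nonneg M" "\<forall>t\<ge>0. M t > 0" for g M
    using abs_d2_mult_integrable_nonneg[OF that t] by (auto simp: I_def)
  note has_I_L = has_I[OF C2_f C2_L L_pos] has_I[OF C2_L C2_L L_pos]
  note has_I_Lt = has_I[OF C2_ft C2_Lt Lt_pos] has_I[OF C2_Lt C2_Lt Lt_pos]
  have "((\<lambda>s. (d1 L s)^2) has_integral IB) {0..t}"
    unfolding IB_def using C2_nonneg_continuous_d1[OF C2_L]
    by (intro integrable_integral continuous_on_atLeast_integrable_on continuous_intros)
  then have has_IB: "((\<lambda>s. 8 * K * (d1 L s)^2) has_integral (8 * K * IB)) {0..t}"
    by (rule has_integral_cmult_real)
  have "((\<lambda>s. \<bar>d2 f s\<bar> * L s + 2 * (\<bar>d2 L s\<bar> * L s) + 8 * K * (d1 L s)^2) has_integral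
      (I f L + 2 * I L L + 8 * K * IB)) {0..t}"
    by (intro has_integral_add has_integral_cmult_real has_I_L(1,3) has_IB)
  then have "I ft Lt \<le> I f L + 2 * I L L + 8 * K * IB"
    using weighted_derivatives_truncated_le(3) by (intro has_integral_le[OF has_I_Lt(1)]) (auto simp: K_def)
  moreover have "((\<lambda>s. 8 * K * (d1 L s)^2 + \<bar>d2 L s\<bar> * L s) has_integral (8 * K * IB + I L L)) {0..t}"
    by (intro has_integral_add has_I_L(3) has_IB)
  then have "I Lt Lt \<le> 8 * K * IB + I L L"
    using weighted_derivatives_truncated_le(4) by (intro has_integral_le[OF has_I_Lt(3)]) (auto simp: K_def)
  moreover note weighted_derivatives_truncated_le(1,2)[OF t] has_I_L(2,4)
  moreover have "0 \<le> \<bar>d1 f t\<bar> * L t" using L_pos[rule_format, OF t] by simp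
  ultimately have "E_fun ft Lt t \<le> 5 * E_fun f L t + 12 * (K * IB)"
    unfolding E_fun_def I_def by argo
  also have "\<dots> \<le> 5 * E_fun f L t + 12 * (K * (2 * E_fun f L t + \<bar>L 0 * d1 L 0\<bar>))"
    using integral_square_d1_le_E_fun[OF C2_f C2_L L_pos t] K
    by (simp add: IB_def mult_left_mono)
  finally show ?thesis by (simp add: K_def algebra_simps)
qed

lemma cond_III_truncated: "cond_III ft Lt"
proof -
  define k where "k = \<bar>L 0 * d1 L 0\<bar>"
  have "((\<lambda>t. E_fun f L t / t) \<longlongrightarrow> 0) at_top" using cond_III unfolding cond_III_def .
  moreover have "((\<lambda>t. k / t) \<longlongrightarrow> 0) at_top"
    by (intro tendsto_divide_0[OF tendsto_const] filterlim_at_top_imp_at_infinity filterlim_ident)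
  ultimately have upper: "((\<lambda>t. (5 + 24 * (L0 + 1)) * (E_fun f L t / t) + 12 * (L0 + 1) * (k / t))
      \<longlongrightarrow> 0) at_top"
    using tendsto_add[OF tendsto_mult_right_zero tendsto_mult_right_zero] by fastforce
  show ?thesis unfolding cond_III_def
  proof (rule tendsto_sandwich[OF _ _ tendsto_const upper])
    show "\<forall>\<^sub>F t in at_top. 0 \<le> E_fun ft Lt t / t"
      using eventually_gt_at_top[of 0]
      by eventually_elim (simp add: E_fun_nonneg[OF C2_ft C2_Lt Lt_pos])
    show "\<forall>\<^sub>F t in at_top. E_fun ft Lt t / t
        \<le> (5 + 24 * (L0 + 1)) * (E_fun f L t / t) + 12 * (L0 + 1) * (k / t)"
      using eventually_gt_at_top[of 0]
    proof eventually_elim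
      case (elim t)
      then have "E_fun ft Lt t / t \<le> ((5 + 24 * (L0 + 1)) * E_fun f L t + 12 * (L0 + 1) * k) / t"
        using E_fun_truncated_le[of t] unfolding k_def by (intro divide_right_mono) auto
      then show ?case by (simp add: add_divide_distrib)
    qed
  qed
qed

lemma eventually_abs_d1_L_mult_L_le: "eventually (\<lambda>t. \<bar>d1 L t\<bar> * L t \<le> t) at_top"
proof -
  have "((\<lambda>t. E_fun f L t / t) \<longlongrightarrow> 0) at_top" using cond_III unfolding cond_III_def .
  then have "eventually (\<lambda>t. E_fun f L t / t < 1/2) at_top" by (rule order_tendstoD) simp
  with eventually_gt_at_top[of 0] show ?thesis
  proof eventually_elim
    case (elim t)
    then have "E_fun f L t < t / 2" by (simp add: field_simps)
    moreover have "\<bar>d1 L t\<bar> * L t \<le> 2 * E_fun f L t"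
      using abs_d2_mult_integrable_nonneg(2)[OF C2_f C2_L L_pos, of t]
        abs_d2_mult_integrable_nonneg(2)[OF C2_L C2_L L_pos, of t] L_pos[rule_format, of t] elim
      unfolding E_fun_def by simp
    ultimately show ?case by simp
  qed
qed

lemma L_square_growth: "\<exists>c\<ge>0. \<exists>T. \<forall>t\<ge>T. L t * L t \<le> c + t * t"
proof -
  obtain T where T: "T \<ge> 0" and bound: "\<And>t. t \<ge> T \<Longrightarrow> \<bar>d1 L t\<bar> * L t \<le> t"
    using eventually_conj[OF eventually_abs_d1_L_mult_L_le eventually_ge_at_top[of 0]]
    unfolding eventually_at_top_linorder by (metis order.trans order_refl)
  have "L t * L t \<le> L T * L T + t * t" if t: "t \<ge> T" for t
  proof -
    have "((\<lambda>s. L s * L s) has_real_derivative 2 * (L s * d1 L s)) (at s within {0..})"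
      if "s \<ge> 0" for s
      using DERIV_mult[OF C2_nonneg_has_d1[OF C2_L that] C2_nonneg_has_d1[OF C2_L that]]
      by (simp add: algebra_simps)
    from has_integral_from_derivative_within_nonneg[OF T t this]
    have "((\<lambda>s. 2 * (L s * d1 L s)) has_integral (L t * L t - L T * L T)) {T..t}" by simp
    moreover have "((\<lambda>s. 2 * s) has_integral (t * t - T * T)) {T..t}"
      by (rule has_integral_from_derivative_within_nonneg[OF T t, of "\<lambda>s. s * s"])
        (auto intro!: derivative_eq_intros)
    moreover have "2 * (L s * d1 L s) \<le> 2 * s" if "s \<in> {T..t}" for s
    proof -
      have "L s * d1 L s \<le> L s * \<bar>d1 L s\<bar>"
        using L_pos[rule_format, of s] T that by (intro mult_left_mono) auto
      then show ?thesis using bound[of s] that by (simp add: mult.commute)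
    qed
    ultimately have "L t * L t - L T * L T \<le> t * t - T * T" by (rule has_integral_le)
    then show ?thesis by (smt (verit) zero_le_square)
  qed
  then show ?thesis by (intro exI[of _ "L T * L T"] conjI exI[of _ T]) simp_all
qed

lemma ln_L_sublinear: "((\<lambda>t. max 0 (ln (L t)) / t) \<longlongrightarrow> 0) at_top"
proof -
  obtain c T where "c \<ge> 0" and square_le: "\<And>t. t \<ge> T \<Longrightarrow> L t * L t \<le> c + t * t"
    using L_square_growth by blast
  have "eventually (\<lambda>t. 0 \<le> max 0 (ln (L t)) / t) at_top"
    using eventually_gt_at_top[of 0] by eventually_elim simp
  moreover have "eventually (\<lambda>t. max 0 (ln (L t)) / t \<le> ln (1 + c + t * t) / 2 / t) at_top"
    using eventually_ge_at_top[of "max T 1"]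
  proof eventually_elim
    case (elim t)
    then have t_ge: "T \<le> t" "1 \<le> t" by simp_all
    then have Lt: "L t > 0" using L_pos[rule_format, of t] by simp
    have "L t * L t \<le> 1 + c + t * t" using square_le[OF t_ge(1)] by linarith
    then have "ln (L t * L t) \<le> ln (1 + c + t * t)" using Lt by (intro ln_mono) simp_all
    then have "ln (L t) \<le> ln (1 + c + t * t) / 2" using Lt by (simp add: ln_mult)
    moreover have "0 \<le> ln (1 + c + t * t) / 2"
      using \<open>c \<ge> 0\<close> zero_le_square[of t] by (intro divide_nonneg_pos ln_ge_zero) simp_all
    ultimately have "max 0 (ln (L t)) \<le> ln (1 + c + t * t) / 2" by (rule max.boundedI[rotated])
    moreover have "0 \<le> t" using t_ge(2) by simp
    ultimately show ?case by (rule divide_right_mono)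
  qed
  moreover have "((\<lambda>t. ln (1 + c + t * t) / 2 / t) \<longlongrightarrow> 0) at_top"
    using \<open>c \<ge> 0\<close> by real_asymp
  ultimately show ?thesis by (rule tendsto_sandwich[OF _ _ tendsto_const])
qed

lemma S_integrand_truncated_ge:
  assumes s: "s \<ge> 0" and e: "e > 0" and \<sigma>: "pi^2 / (8 * L0^2) \<le> \<sigma>"
  shows "S_integrand r f L s - e/2 * (d1 f s)^2 - 2 * (1 + 1/e) * (d1 L s)^2 - \<sigma>
    \<le> S_integrand r ft Lt s"
proof -
  define y where "y = (1 - cutoff' L0 (L s)) * d1 L s"
  have "\<bar>1 - cutoff' L0 (L s)\<bar> \<le> 2" using abs_cutoff'_le[of L0 "L s"] by (simp add: abs_le_iff)
  then have "(1 - cutoff' L0 (L s))^2 \<le> 2^2" by (metis abs_le_square_iff abs_numeral)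
  then have "y^2 \<le> 4 * (d1 L s)^2" unfolding y_def power_mult_distrib by (intro mult_right_mono) auto
  then have "(1 + 1/e)/2 * y^2 \<le> (1 + 1/e)/2 * (4 * (d1 L s)^2)"
    using e by (intro mult_left_mono) auto
  also have "\<dots> = 2 * (1 + 1/e) * (d1 L s)^2" using e by (simp add: field_simps)
  finally have "(1 + 1/e)/2 * y^2 \<le> 2 * (1 + 1/e) * (d1 L s)^2" .
  moreover have "1/2 * (d1 ft s)^2 \<le> 1/2 * ((1 + e) * (d1 f s)^2 + (1 + 1/e) * y^2)"
    using square_add_le[OF e, of "d1 f s" y] unfolding d1_ft[OF s, folded y_def] by simp
  moreover have "1/2 * ((1 + e) * (d1 f s)^2 + (1 + 1/e) * y^2)
      = 1/2 * (d1 f s)^2 + e/2 * (d1 f s)^2 + (1 + 1/e)/2 * y^2"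
    using e by (simp add: field_simps)
  moreover have "pi^2 / (8 * (Lt s)^2) \<le> \<sigma> + pi^2 / (8 * (L s)^2)"
  proof (cases "L s \<le> L0")
    case True
    have "0 \<le> pi^2 / (8 * L0^2)" by simp
    then have "0 \<le> \<sigma>" using \<sigma> by linarith
    then show ?thesis using True by (simp add: Lt_eq cutoff_def)
  next
    case False
    then have "L0^2 \<le> (Lt s)^2"
      using cutoff_ge[of L0 "L s"] L0_ge_1 by (intro power_mono) (auto simp: Lt_eq)
    then have "pi^2 / (8 * (Lt s)^2) \<le> pi^2 / (8 * L0^2)"
      using L0_ge_1 Lt_pos[rule_format, OF s] by (intro divide_left_mono) simp_all
    moreover have "0 \<le> pi^2 / (8 * (L s)^2)" by simp
    ultimately show ?thesis using \<sigma> by linarith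
  qed
  ultimately show ?thesis unfolding S_integrand_def by linarith
qed

lemma integral_S_integrand_truncated_ge:
  assumes t: "t > 0" and e: "e > 0" and \<sigma>: "pi^2 / (8 * L0^2) \<le> \<sigma>"
  shows "integral {0..t} (S_integrand r ft Lt) \<ge> (1 + e) * integral {0..t} (S_integrand r f L)
    - e * r * t - 2 * (1 + 1/e) * (2 * E_fun f L t + \<bar>L 0 * d1 L 0\<bar>) - \<sigma> * t"
proof -
  define IGo where "IGo = integral {0..t} (S_integrand r f L)"
  define IGn where "IGn = integral {0..t} (S_integrand r ft Lt)"
  define IA where "IA = integral {0..t} (\<lambda>s. (d1 f s)^2)"
  define IB where "IB = integral {0..t} (\<lambda>s. (d1 L s)^2)"
  have has_IGo: "(S_integrand r f L has_integral IGo) {0..t}"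
    unfolding IGo_def by (rule integrable_integral[OF S_integrand_integrable[OF C2_f C2_L L_pos t]])
  have has_IGn: "(S_integrand r ft Lt has_integral IGn) {0..t}"
    unfolding IGn_def by (rule integrable_integral[OF S_integrand_integrable[OF C2_ft C2_Lt Lt_pos t]])
  have has_IA: "((\<lambda>s. (d1 f s)^2) has_integral IA) {0..t}"
    unfolding IA_def using C2_nonneg_continuous_d1[OF C2_f]
    by (intro integrable_integral continuous_on_atLeast_integrable_on continuous_intros)
  have has_IB: "((\<lambda>s. (d1 L s)^2) has_integral IB) {0..t}"
    unfolding IB_def using C2_nonneg_continuous_d1[OF C2_L]
    by (intro integrable_integral continuous_on_atLeast_integrable_on continuous_intros)
  have has_const: "((\<lambda>s. c) has_integral (c * t)) {0..t}" for c
    using has_integral_const_real[of c 0 t] t by (simp add: mult.commute)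
  have "((\<lambda>s. r - 1/2 * (d1 f s)^2) has_integral (r * t - 1/2 * IA)) {0..t}"
    by (intro has_integral_diff has_const has_integral_cmult_real has_IA)
  then have "IGo \<le> r * t - 1/2 * IA"
    by (rule has_integral_le[OF has_IGo]) (simp add: S_integrand_def)
  then have IA_le: "e/2 * IA \<le> e * r * t - e * IGo"
    using mult_left_mono[of IGo "r * t - 1/2 * IA" e] e by (simp add: algebra_simps)
  have "((\<lambda>s. S_integrand r f L s - e/2 * (d1 f s)^2 - 2 * (1 + 1/e) * (d1 L s)^2 - \<sigma>)
      has_integral (IGo - e/2 * IA - 2 * (1 + 1/e) * IB - \<sigma> * t)) {0..t}"
    by (intro has_integral_diff has_IGo has_const has_integral_cmult_real has_IA has_IB)
  moreover have "S_integrand r f L s - e/2 * (d1 f s)^2 - 2 * (1 + 1/e) * (d1 L s)^2 - \<sigma>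
      \<le> S_integrand r ft Lt s" if "s \<in> {0..t}" for s
    using that by (intro S_integrand_truncated_ge[OF _ e \<sigma>]) simp
  ultimately have "IGo - e/2 * IA - 2 * (1 + 1/e) * IB - \<sigma> * t \<le> IGn"
    by (rule has_integral_le[OF _ has_IGn])
  moreover have "2 * (1 + 1/e) * IB \<le> 2 * (1 + 1/e) * (2 * E_fun f L t + \<bar>L 0 * d1 L 0\<bar>)"
    using integral_square_d1_le_E_fun[OF C2_f C2_L L_pos] t e
    by (intro mult_left_mono) (simp_all add: IB_def)
  moreover have "(1 + e) * IGo = IGo + e * IGo" by (simp add: algebra_simps)
  ultimately show ?thesis
    using IA_le unfolding IGo_def[symmetric] IGn_def[symmetric] by argo
qed

lemma mult_S_avg_truncated_ge:
  assumes t: "t > 0" and e: "e > 0" and \<sigma>: "pi^2 / (8 * L0^2) \<le> \<sigma>"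
  shows "t * S_avg r ft Lt t \<ge> t * ((1 + e) * S_avg r f L t - e * r - \<sigma>)
    - (2 * (1 + 1/e) * (2 * E_fun f L t + \<bar>L 0 * d1 L 0\<bar>)
       + (1 + e)/2 * (max 0 (ln (L t)) + \<bar>ln (L 0)\<bar>) + \<bar>ln (Lt 0)\<bar>/2)"
proof -
  define IGo where "IGo = integral {0..t} (S_integrand r f L)"
  define D where "D = (ln (L t) - ln (L 0)) / 2"
  have "t * S_avg r f L t = IGo + D"
    using mult_S_avg_eq[OF C2_f C2_L L_pos t, of r] by (simp add: IGo_def D_def)
  then have old: "t * ((1 + e) * S_avg r f L t - e * r - \<sigma>) = (1 + e) * IGo + (1 + e) * D - e * r * t - \<sigma> * t"
    by (simp add: algebra_simps)
  have "e * ln (L t) \<le> e * max 0 (ln (L t))" "- (e * \<bar>ln (L 0)\<bar>) \<le> e * ln (L 0)"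
    using e mult_left_mono[of "ln (L t)" "max 0 (ln (L t))" e]
      mult_left_mono[of "- \<bar>ln (L 0)\<bar>" "ln (L 0)" e] by simp_all
  moreover have "ln (L t) - min (ln (L t)) 0 = max 0 (ln (L t))" by auto
  moreover have "(1 + e) * D = (ln (L t) - ln (L 0)) / 2 + (e * ln (L t) - e * ln (L 0)) / 2"
    by (simp add: D_def field_simps)
  moreover have "(1 + e)/2 * (max 0 (ln (L t)) + \<bar>ln (L 0)\<bar>)
      = (max 0 (ln (L t)) + \<bar>ln (L 0)\<bar>) / 2 + (e * max 0 (ln (L t)) + e * \<bar>ln (L 0)\<bar>) / 2"
    by (simp add: field_simps)
  moreover have "- \<bar>ln (L 0)\<bar> \<le> ln (L 0)" by simp
  ultimately have "(1 + e) * D - min (ln (L t)) 0 / 2 \<le> (1 + e)/2 * (max 0 (ln (L t)) + \<bar>ln (L 0)\<bar>)"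
    by argo
  then show ?thesis
    using old mult_S_avg_eq[OF C2_ft C2_Lt Lt_pos t, of r] integral_S_integrand_truncated_ge[OF t e \<sigma>, of r]
      ln_Lt_ge[OF less_imp_le[OF t]] abs_ge_self[of "ln (Lt 0)"]
    unfolding IGo_def[symmetric] by argo
qed

lemma mult_S_avg_truncated_le:
  assumes t: "t > 0"
  shows "t * S_avg r ft Lt t \<le> r * t + (ln (L0 + 1) - ln (Lt 0)) / 2"
proof -
  have "((\<lambda>s. r) has_integral (r * t)) {0..t}"
    using has_integral_const_real[of r 0 t] t by (simp add: mult.commute)
  then have "integral {0..t} (S_integrand r ft Lt) \<le> r * t"
    using S_integrand_integrable[OF C2_ft C2_Lt Lt_pos t]
    by (intro has_integral_le[OF integrable_integral]) (auto intro: S_integrand_le)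
  moreover have "Lt t > 0" using Lt_pos t by simp
  then have "ln (Lt t) \<le> ln (L0 + 1)" using Lt_le(2)[of t] by simp
  ultimately show ?thesis using mult_S_avg_eq[OF C2_ft C2_Lt Lt_pos t, of r] by argo
qed

lemma S_avg_truncated_lower_bound:
  assumes e: "e > 0" and \<sigma>: "pi^2 / (8 * L0^2) \<le> \<sigma>"
  shows "\<exists>B. (B \<longlongrightarrow> 0) at_top \<and>
    eventually (\<lambda>t. S_avg r ft Lt t \<ge> (1 + e) * S_avg r f L t - e * r - \<sigma> - B t) at_top"
proof -
  define C where "C = 2 * (1 + 1/e) * \<bar>L 0 * d1 L 0\<bar> + (1 + e)/2 * \<bar>ln (L 0)\<bar> + \<bar>ln (Lt 0)\<bar>/2"
  define B where "B t = (2 * (1 + 1/e) * (2 * E_fun f L t + \<bar>L 0 * d1 L 0\<bar>)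
       + (1 + e)/2 * (max 0 (ln (L t)) + \<bar>ln (L 0)\<bar>) + \<bar>ln (Lt 0)\<bar>/2) / t" for t
  have B_eq: "B t = 4 * (1 + 1/e) * (E_fun f L t / t) + (1 + e)/2 * (max 0 (ln (L t)) / t) + C / t"
    for t by (simp add: B_def C_def add_divide_distrib algebra_simps)
  have "((\<lambda>t. E_fun f L t / t) \<longlongrightarrow> 0) at_top" using cond_III unfolding cond_III_def .
  moreover have "((\<lambda>t. C / t) \<longlongrightarrow> 0) at_top"
    by (intro tendsto_divide_0[OF tendsto_const] filterlim_at_top_imp_at_infinity filterlim_ident)
  ultimately have "(B \<longlongrightarrow> 0) at_top"
    unfolding B_eq using tendsto_add_zero[OF tendsto_add_zero[OF
        tendsto_mult_right_zero tendsto_mult_right_zero[OF ln_L_sublinear]]] by blast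
  moreover have "eventually (\<lambda>t. S_avg r ft Lt t \<ge> (1 + e) * S_avg r f L t - e * r - \<sigma> - B t) at_top"
    using eventually_gt_at_top[of 0]
  proof eventually_elim
    case (elim t)
    then show ?case
      using mult_S_avg_truncated_ge[OF elim e \<sigma>, of r] unfolding B_def
      by (simp add: field_simps)
  qed
  ultimately show ?thesis by blast
qed

lemma S_val_truncated_le: "S_val r ft Lt \<le> ereal (r + 1)"
proof -
  define C where "C = (ln (L0 + 1) - ln (Lt 0)) / 2"
  have "((\<lambda>t. C / t) \<longlongrightarrow> 0) at_top"
    by (intro tendsto_divide_0[OF tendsto_const] filterlim_at_top_imp_at_infinity filterlim_ident)
  then have "eventually (\<lambda>t. C / t < 1) at_top" by (rule order_tendstoD) simp
  then have "eventually (\<lambda>t. ereal (S_avg r ft Lt t) \<le> ereal (r + 1)) at_top"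
    using eventually_gt_at_top[of 0]
  proof eventually_elim
    case (elim t)
    then have "S_avg r ft Lt t \<le> r + C / t"
      using mult_S_avg_truncated_le[OF elim(2), of r] by (simp add: C_def field_simps)
    then have "S_avg r ft Lt t \<le> r + 1" using elim(1) by linarith
    then show ?case by simp
  qed
  then have "S_val r ft Lt \<le> Liminf at_top (\<lambda>t::real. ereal (r + 1))"
    unfolding S_val_eq_Liminf_S_avg by (rule Liminf_mono)
  then show ?thesis by (simp add: Liminf_const)
qed

end

lemma half_le_Liminf_of_lower_bounds:
  fixes A A' :: "real \<Rightarrow> real" and r s :: real
  assumes S: "Liminf at_top (\<lambda>t. ereal (A t)) = ereal s" and s: "s > 0" and r: "r \<ge> 0"
    and bound: "\<And>e. e > 0 \<Longrightarrow> \<exists>B. (B \<longlongrightarrow> 0) at_top \<and>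
      eventually (\<lambda>t. A' t \<ge> (1 + e) * A t - e * r - s/2 - B t) at_top"
  shows "ereal (s/2) \<le> Liminf at_top (\<lambda>t. ereal (A' t))"
  unfolding le_Liminf_iff
proof (intro allI impI)
  fix y assume y: "y < ereal (s/2)"
  obtain y1 where y1: "y \<le> ereal y1" "0 \<le> y1" "y1 < s/2"
  proof (cases y)
    case (real y')
    then show ?thesis using that[of "max y' 0"] y s by auto
  next
    case PInf
    then show ?thesis using y by simp
  next
    case MInf
    then show ?thesis using that[of 0] s by simp
  qed
  define \<delta> where "\<delta> = s/2 - y1"
  have \<delta>: "0 < \<delta>" "\<delta> \<le> s/2" using y1 by (auto simp: \<delta>_def)
  define e where "e = \<delta> / (4 * (r + 1))"
  have e: "e > 0" using \<delta> r by (simp add: e_def)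
  have "e * r = \<delta>/4 * (r / (r + 1))" by (simp add: e_def)
  also have "\<dots> \<le> \<delta>/4" using \<delta> r by (intro mult_left_le) auto
  finally have er: "e * r \<le> \<delta>/4" .
  obtain B where "(B \<longlongrightarrow> 0) at_top"
    and ev_A': "eventually (\<lambda>t. A' t \<ge> (1 + e) * A t - e * r - s/2 - B t) at_top"
    using bound[OF e] by blast
  then have ev_B: "eventually (\<lambda>t. B t < \<delta>/4) at_top" by (intro order_tendstoD) (use \<delta> in auto)
  have "ereal (s - \<delta>/4) < ereal s" using \<delta> by simp
  then have ev_A: "eventually (\<lambda>t. ereal (s - \<delta>/4) < ereal (A t)) at_top"
    using S unfolding le_Liminf_iff[symmetric] by (metis le_Liminf_iff order_refl)
  from ev_A ev_A' ev_B have "eventually (\<lambda>t. y1 < A' t) at_top"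
  proof eventually_elim
    case (elim t)
    then have "A t > s - \<delta>/4" by simp
    moreover from this have "e * A t \<ge> 0" using e \<delta> by simp
    moreover have "(1 + e) * A t = A t + e * A t" by (simp add: algebra_simps)
    ultimately show ?case using elim(2,3) er \<delta> unfolding \<delta>_def by argo
  qed
  then show "eventually (\<lambda>t. y < ereal (A' t)) at_top"
    by eventually_elim (use y1(1) in \<open>auto intro: le_less_trans\<close>)
qed

lemma pi_square_div_le_half:
  assumes "s > 0" "pi / (2 * sqrt s) \<le> L0"
  shows "pi^2 / (8 * L0^2) \<le> s/2"
proof -
  have "pi \<le> 2 * sqrt s * L0" using assms by (simp add: divide_le_eq mult.commute)
  then have "pi^2 \<le> (2 * sqrt s * L0)^2" by (intro power_mono) auto
  also have "\<dots> = 4 * s * L0^2" using assms(1) by (simp add: power_mult_distrib)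
  finally have "pi^2 \<le> 4 * s * L0^2" .
  moreover have "L0 > 0" using assms pi_gt_zero by (smt (verit) divide_pos_pos real_sqrt_gt_zero)
  ultimately show ?thesis by (simp add: field_simps)
qed

theorem lemma7:
  fixes r :: real and f L :: "real \<Rightarrow> real" and L0 :: real
    and Lt ft :: "real \<Rightarrow> real"
  assumes "r > 0"
    and "usual_conditions r f L"
    and "S_val r f L > 0"
    and "L0 = max (pi / (2 * sqrt (real_of_ereal (S_val r f L)))) 1"
    and "\<And>t. Lt t = (if L t \<le> L0 then L t else L0 + (L t - L0) * exp (- ((L t - L0)^2)))"
    and "\<And>t. ft t = f t + L t - Lt t"
  shows "(\<forall>t\<ge>0. Lt t > 0) \<and> cond_II ft Lt \<and> cond_III ft Lt \<and> cond_IV r ft Lt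
         \<and> S_val r ft Lt \<ge> S_val r f L / 2 \<and> S_val r ft Lt > 0"
proof -
  obtain s where S: "S_val r f L = ereal s"
    using assms(2) unfolding usual_conditions_def cond_IV_def by (cases "S_val r f L") auto
  have s: "s > 0" using assms(3) S by simp
  interpret truncation f L L0 Lt ft
    using assms(2,4-6) unfolding usual_conditions_def cond_II_def
    by unfold_locales (auto simp: cutoff_def)
  have \<sigma>: "pi^2 / (8 * L0^2) \<le> s/2"
    using assms(4) S s by (intro pi_square_div_le_half) auto
  have lower: "ereal (s/2) \<le> S_val r ft Lt"
    unfolding S_val_eq_Liminf_S_avg
    by (intro half_le_Liminf_of_lower_bounds[where r = r, OF S[unfolded S_val_eq_Liminf_S_avg] s])
      (simp_all add: less_imp_le[OF assms(1)] S_avg_truncated_lower_bound[OF _ \<sigma>])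
  have "\<bar>S_val r ft Lt\<bar> \<noteq> \<infinity>"
    using lower S_val_truncated_le[of r] by (cases "S_val r ft Lt") auto
  moreover have "S_val r ft Lt > 0"
    using lower s by (metis ereal_less(2) half_gt_zero order_less_le_trans)
  ultimately show ?thesis
    using Lt_pos C2_ft C2_Lt cond_III_truncated lower S
    unfolding cond_II_def cond_IV_def by simp
qed

end
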